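(* Fix $i\in[n]$ and $\mathbf{x}_{-i}\in\mathcal{C}_{-i}$, let $A=A(\mathbf{x}_{-i})$, $\mathcal{R}_A=\prod_{j\in A}(0,\omega_{ij}-\mathbf{x}_T^{j|i})$ and $\mathcal{V}_{\mathbf{x}_{-i}}((x_{ij})_{j\in A})=\sum_{j\in A}x_{ij}^{a_i}\mathcal{F}_{ij}(x_{ij}+\mathbf{x}_T^{j|i})$. Then the system of equations $\psi_{ij}(x_{ij};\mathbf{x}_T^{j|i})=0$, $j\in A$, has a unique solution in $\mathcal{R}_A$, and this solution is a global maximum of $\mathcal{V}_{\mathbf{x}_{-i}}$ on $\mathcal{R}_A$.
   Context: Fragile multi-CPR Game: $n,m\ge1$, $[k]=\{1,\dots,k\}$, $C_m=\{(x_1,\dots,x_m)\in[0,1]^m:\sum_j x_j\le1\}$, $\mathcal{C}_{-i}=\prod_{[n]\setminus\{i\}}C_m$; for $\mathbf{x}_{-i}=(\mathbf{x}_\ell)_{\ell\ne i}$ with $\mathbf{x}_\ell=(x_{\ell1},\dots,x_{\ell m})$ put $\mathbf{x}_T^{j|i}=\sum_{\ell\ne i}x_{\ell j}$. Each CPR $j$ has a return rate $\mathcal{R}_j(t)>1$ and failure probability $p_j(t)\in[0,1]$; each player $i$ has parameters $a_i,k_i$. Effective rate: $\mathcal{F}_{ij}(t)=(\mathcal{R}_j(t)-1)^{a_i}(1-p_j(t))-k_ip_j(t)$. Assumption: (1) $p_j(0)=0$, $p_j(t)=1$ for $t\ge1$; (2) $a_i\in(0,1]$, $k_i>0$; (3)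 each $\mathcal{F}_{ij}$ (continuous on $[0,1]$) has strictly negative first and second derivatives on $(0,1)$. Let $\omega_{ij}\in(0,1)$ be the unique zero of $\mathcal{F}_{ij}$ in $(0,1)$. Active CPRs: $A(\mathbf{x}_{-i})=\{j:\mathbf{x}_T^{j|i}<\omega_{ij}\}$. Define $\psi_{ij}(x;s)=x\,\mathcal{F}_{ij}'(x+s)+a_i\mathcal{F}_{ij}(x+s)$. *)

theory Defs
  imports "HOL-Analysis.Analysis"
begin

text \<open>Effective rate F_ij(t) = (R_j(t)-1)^(a_i) (1 - p_j(t)) - k_i p_j(t).
  R j, p j : return rate / failure probability of CPR j; a i, k i : player parameters.\<close>
definition Feff :: "(nat \<Rightarrow> real \<Rightarrow> real) \<Rightarrow> (nat \<Rightarrow> real \<Rightarrow> real) \<Rightarrow>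
    (nat \<Rightarrow> real) \<Rightarrow> (nat \<Rightarrow> real) \<Rightarrow> nat \<Rightarrow> nat \<Rightarrow> real \<Rightarrow> real" where
  "Feff R p a k i j t = (R j t - 1) powr (a i) * (1 - p j t) - k i * p j t"

definition omega :: "(nat \<Rightarrow> real \<Rightarrow> real) \<Rightarrow> (nat \<Rightarrow> real \<Rightarrow> real) \<Rightarrow>
    (nat \<Rightarrow> real) \<Rightarrow> (nat \<Rightarrow> real) \<Rightarrow> nat \<Rightarrow> nat \<Rightarrow> real" where
  "omega R p a k i j = (THE w. w \<in> {0<..<1} \<and> Feff R p a k i j w = 0)"

definition xT :: "nat \<Rightarrow> nat \<Rightarrow> (nat \<Rightarrow> nat \<Rightarrow> real) \<Rightarrow> nat \<Rightarrow> real" where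
  "xT n i x j = (\<Sum>l\<in>{1..n} - {i}. x l j)"

definition active :: "(nat \<Rightarrow> real \<Rightarrow> real) \<Rightarrow> (nat \<Rightarrow> real \<Rightarrow> real) \<Rightarrow>
    (nat \<Rightarrow> real) \<Rightarrow> (nat \<Rightarrow> real) \<Rightarrow> nat \<Rightarrow> nat \<Rightarrow> nat \<Rightarrow> (nat \<Rightarrow> nat \<Rightarrow> real) \<Rightarrow> nat set" where
  "active R p a k n m i x = {j \<in> {1..m}. xT n i x j < omega R p a k i j}"

definition psi :: "(nat \<Rightarrow> real \<Rightarrow> real) \<Rightarrow> (nat \<Rightarrow> real \<Rightarrow> real) \<Rightarrow>
    (nat \<Rightarrow> real) \<Rightarrow> (nat \<Rightarrow> real) \<Rightarrow> nat \<Rightarrow> nat \<Rightarrow> real \<Rightarrow> real \<Rightarrow> real" where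
  "psi R p a k i j y s = y * deriv (Feff R p a k i j) (y + s) + a i * Feff R p a k i j (y + s)"

definition regionA :: "(nat \<Rightarrow> real \<Rightarrow> real) \<Rightarrow> (nat \<Rightarrow> real \<Rightarrow> real) \<Rightarrow>
    (nat \<Rightarrow> real) \<Rightarrow> (nat \<Rightarrow> real) \<Rightarrow> nat \<Rightarrow> nat \<Rightarrow> nat \<Rightarrow> (nat \<Rightarrow> nat \<Rightarrow> real) \<Rightarrow> (nat \<Rightarrow> real) set" where
  "regionA R p a k n m i x =
     (\<Pi>\<^sub>E j\<in>active R p a k n m i x. {0<..<omega R p a k i j - xT n i x j})"

definition Vfun :: "(nat \<Rightarrow> real \<Rightarrow> real) \<Rightarrow> (nat \<Rightarrow> real \<Rightarrow> real) \<Rightarrow>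
    (nat \<Rightarrow> real) \<Rightarrow> (nat \<Rightarrow> real) \<Rightarrow> nat \<Rightarrow> nat \<Rightarrow> nat \<Rightarrow> (nat \<Rightarrow> nat \<Rightarrow> real) \<Rightarrow> (nat \<Rightarrow> real) \<Rightarrow> real" where
  "Vfun R p a k n m i x y =
     (\<Sum>j\<in>active R p a k n m i x. (y j) powr (a i) * Feff R p a k i j (y j + xT n i x j))"

end

theory Submission imports Defs begin

(* The payoff V is a sum of one-variable payoffs g_j(y) = y^a F_j(y + s_j), so it suffices
   to treat one coordinate. There g'(y) = y^(a-1) psi(y), and psi is strictly decreasing
   because psi' = (1 + a) F' + y F'' < 0. Moreover psi is positive near 0 (where F > 0) and
   psi(omega - s) = (omega - s) F'(omega) < 0, so psi has exactly one root, and g increases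
   before it and decreases after it. *)

lemma DERIV_neg_imp_decreasing_on_open_interval:
  fixes G G' :: "real \<Rightarrow> real"
  assumes "\<And>t. t \<in> {c<..<d} \<Longrightarrow> (G has_real_derivative G' t) (at t) \<and> G' t < 0"
    and "c < u" "u < v" "v < d"
  shows "G v < G u"
proof (rule DERIV_neg_imp_decreasing[of u v G])
  fix t
  assume "u \<le> t" "t \<le> v"
  with assms show "\<exists>y. (G has_real_derivative y) (at t) \<and> y < 0"
    by (meson greaterThanLessThan_iff le_less_trans less_le_trans)
qed (use assms in simp)

locale decreasing_concave_on_unit =
  fixes F F' F'' :: "real \<Rightarrow> real"
  assumes has_deriv: "\<And>t. t \<in> {0<..<1} \<Longrightarrow> (F has_real_derivative F' t) (at t)"
    and deriv_neg: "\<And>t. t \<in> {0<..<1} \<Longrightarrow> F' t < 0"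
    and has_deriv2: "\<And>t. t \<in> {0<..<1} \<Longrightarrow> (F' has_real_derivative F'' t) (at t)"
    and deriv2_neg: "\<And>t. t \<in> {0<..<1} \<Longrightarrow> F'' t < 0"
begin

lemma decreasing: "0 < u \<Longrightarrow> u < v \<Longrightarrow> v < 1 \<Longrightarrow> F v < F u"
  using has_deriv deriv_neg by (intro DERIV_neg_imp_decreasing_on_open_interval[of 0 1 F F']) auto

lemma deriv_decreasing: "0 < u \<Longrightarrow> u < v \<Longrightarrow> v < 1 \<Longrightarrow> F' v < F' u"
  using has_deriv2 deriv2_neg
  by (intro DERIV_neg_imp_decreasing_on_open_interval[of 0 1 F' F'']) auto

lemma unique_zero:
  assumes "continuous_on {0..1} F" and "F 0 > 0" and "F 1 < 0"
  shows "\<exists>!w. w \<in> {0<..<1} \<and> F w = 0"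
proof -
  obtain w where w: "0 \<le> w" "w \<le> 1" "F w = 0"
    using IVT2'[of F 1 0 0] assms by force
  with assms have "w \<in> {0<..<1}"
    by (cases "w = 0"; cases "w = 1") auto
  moreover have "v = w" if "v \<in> {0<..<1}" "F v = 0" for v
    using decreasing[of v w] decreasing[of w v] that \<open>w \<in> {0<..<1}\<close> w
    by (cases v w rule: linorder_cases) auto
  ultimately show ?thesis
    using w by blast
qed

definition scaled_marginal :: "real \<Rightarrow> real \<Rightarrow> real \<Rightarrow> real" where
  "scaled_marginal a s y = y * F' (y + s) + a * F (y + s)"

lemma shifted_has_deriv:
  "y + s \<in> {0<..<1} \<Longrightarrow> ((\<lambda>y. F (y + s)) has_real_derivative F' (y + s)) (at y)"
  using has_deriv DERIV_shift by blast

lemma shifted_has_deriv2: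
  "y + s \<in> {0<..<1} \<Longrightarrow> ((\<lambda>y. F' (y + s)) has_real_derivative F'' (y + s)) (at y)"
  using has_deriv2 DERIV_shift by blast

lemma scaled_marginal_has_deriv:
  assumes "y + s \<in> {0<..<1}"
  shows "(scaled_marginal a s has_real_derivative (1 + a) * F' (y + s) + y * F'' (y + s)) (at y)"
proof -
  have "(scaled_marginal a s has_real_derivative
          1 * F' (y + s) + F'' (y + s) * y + a * F' (y + s)) (at y)"
    unfolding scaled_marginal_def
    using DERIV_add[OF DERIV_mult[OF DERIV_ident shifted_has_deriv2[OF assms]]
        DERIV_cmult[OF shifted_has_deriv[OF assms]]] by simp
  then show ?thesis
    by (simp add: algebra_simps)
qed

lemma scaled_marginal_decreasing:
  assumes "0 < a" "0 \<le> s" "0 < u" "u < v" "v + s < 1"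
  shows "scaled_marginal a s v < scaled_marginal a s u"
proof (rule DERIV_neg_imp_decreasing_on_open_interval[where c = 0 and d = "1 - s" and G = "scaled_marginal a s"
      and G' = "\<lambda>y. (1 + a) * F' (y + s) + y * F'' (y + s)"])
  fix y :: real
  assume y: "y \<in> {0<..<1 - s}"
  then have ys: "y + s \<in> {0<..<1}"
    using assms by auto
  have "(1 + a) * F' (y + s) < 0"
    using deriv_neg[OF ys] assms by (simp add: mult_pos_neg)
  moreover have "y * F'' (y + s) < 0"
    using deriv2_neg[OF ys] y by (simp add: mult_pos_neg)
  ultimately show "(scaled_marginal a s has_real_derivative (1 + a) * F' (y + s) + y * F'' (y + s))
      (at y) \<and> (1 + a) * F' (y + s) + y * F'' (y + s) < 0"
    using scaled_marginal_has_deriv[OF ys] by simp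
qed (use assms in auto)

lemma scaled_marginal_pos_near_zero:
  assumes "0 < a" "0 \<le> s" "0 < c" "c + s < 1" "F (c + s) > 0"
  shows "\<exists>e\<in>{0<..c}. scaled_marginal a s e > 0"
proof -
  define D where "D = - F' (c + s)"
  define P where "P = a * F (c + s)"
  have "D > 0" "P > 0"
    using deriv_neg[of "c + s"] assms by (auto simp: D_def P_def)
  define e where "e = min c (P / (2 * D))"
  have e: "0 < e" "e \<le> c"
    using \<open>D > 0\<close> \<open>P > 0\<close> assms by (auto simp: e_def)
  have "F' (e + s) \<ge> F' (c + s)" "F (e + s) \<ge> F (c + s)"
    using deriv_decreasing[of "e + s" "c + s"] decreasing[of "e + s" "c + s"] e assms
    by (cases "e = c"; force)+
  then have "e * F' (e + s) \<ge> - e * D" "a * F (e + s) \<ge> P"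
    using e assms by (auto simp: D_def P_def mult_left_mono)
  moreover have "e * D \<le> P / 2"
    using \<open>D > 0\<close> by (simp add: e_def min_def field_simps split: if_splits)
  ultimately have "scaled_marginal a s e > 0"
    using \<open>P > 0\<close> by (simp add: scaled_marginal_def)
  with e show ?thesis
    by auto
qed

lemma scaled_marginal_root_exists:
  assumes "0 < a" "0 \<le> s" "s < w" "w < 1" "F w = 0"
  shows "\<exists>y\<in>{0<..<w - s}. scaled_marginal a s y = 0"
proof -
  define L where "L = w - s"
  have "L > 0" "L + s = w"
    using assms by (auto simp: L_def)
  have "F (L / 2 + s) > 0"
    using decreasing[of "L / 2 + s" w] assms \<open>L > 0\<close> \<open>L + s = w\<close> by auto
  then obtain e where e: "0 < e" "e \<le> L / 2" "scaled_marginal a s e > 0"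
    using scaled_marginal_pos_near_zero[of a s "L / 2"] assms \<open>L > 0\<close> \<open>L + s = w\<close> by auto
  have "scaled_marginal a s L < 0"
    using deriv_neg[of w] assms \<open>L > 0\<close> \<open>L + s = w\<close>
    by (simp add: scaled_marginal_def mult_pos_neg)
  moreover have "continuous_on {e..L} (scaled_marginal a s)"
  proof (intro continuous_at_imp_continuous_on ballI)
    fix t
    assume "t \<in> {e..L}"
    then have "t + s \<in> {0<..<1}"
      using e assms \<open>L + s = w\<close> by auto
    then show "isCont (scaled_marginal a s) t"
      using DERIV_isCont[OF scaled_marginal_has_deriv] by blast
  qed
  ultimately obtain y where "e \<le> y" "y \<le> L" "scaled_marginal a s y = 0"
    using IVT2'[of "scaled_marginal a s" L 0 e] e \<open>L > 0\<close> by auto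
  moreover have "y \<noteq> L"
    using \<open>scaled_marginal a s L < 0\<close> \<open>scaled_marginal a s y = 0\<close> by auto
  ultimately show ?thesis
    using e by (auto simp: L_def)
qed

lemma payoff_has_deriv:
  assumes "0 < t" "t + s < 1" "0 \<le> s"
  shows "((\<lambda>t. t powr a * F (t + s)) has_real_derivative t powr (a - 1) * scaled_marginal a s t)
           (at t)"
proof -
  have "((\<lambda>t. t powr a * F (t + s)) has_real_derivative
          a * t powr (a - 1) * F (t + s) + t powr a * F' (t + s)) (at t)"
    using DERIV_mult[OF has_real_derivative_powr[OF assms(1), of a] shifted_has_deriv[of t s]] assms
    by (simp add: algebra_simps)
  moreover have "t powr a = t powr (a - 1) * t"
    using assms powr_add[of t "a - 1" 1] by simp
  ultimately show ?thesis
    by (simp add: scaled_marginal_def algebra_simps)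
qed

lemma payoff_maximal_at_root:
  assumes "0 < a" "0 \<le> s" "0 < y" "y + s < 1" "scaled_marginal a s y = 0"
    and "0 < z" "z + s < 1"
  shows "z powr a * F (z + s) \<le> y powr a * F (y + s)"
proof (cases "z \<le> y")
  case True
  show ?thesis
  proof (rule DERIV_nonneg_imp_nondecreasing[OF True])
    fix t
    assume t: "z \<le> t" "t \<le> y"
    have "scaled_marginal a s t \<ge> 0"
      using scaled_marginal_decreasing[of a s t y] t assms by (cases "t = y") auto
    then show "\<exists>d. ((\<lambda>t. t powr a * F (t + s)) has_real_derivative d) (at t) \<and> 0 \<le> d"
      using payoff_has_deriv[of t s a] t assms by force
  qed
next
  case False
  show ?thesis
  proof (rule DERIV_nonpos_imp_nonincreasing[of y z])
    fix t
    assume t: "y \<le> t" "t \<le> z"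
    have "scaled_marginal a s t \<le> 0"
      using scaled_marginal_decreasing[of a s y t] t assms by (cases "t = y") auto
    then show "\<exists>d. ((\<lambda>t. t powr a * F (t + s)) has_real_derivative d) (at t) \<and> d \<le> 0"
      using payoff_has_deriv[of t s a] t assms by (force simp: mult_nonneg_nonpos)
  qed (use False in simp)
qed

theorem scaled_marginal_unique_root_maximizes_payoff:
  assumes "0 < a" "0 \<le> s" "s < w" "w < 1" "F w = 0"
  shows "\<exists>y\<in>{0<..<w - s}. scaled_marginal a s y = 0
           \<and> (\<forall>z\<in>{0<..<w - s}. scaled_marginal a s z = 0 \<longrightarrow> z = y)
           \<and> (\<forall>z\<in>{0<..<w - s}. z powr a * F (z + s) \<le> y powr a * F (y + s))"
proof -
  obtain y where y: "y \<in> {0<..<w - s}" "scaled_marginal a s y = 0"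
    using scaled_marginal_root_exists assms by blast
  have "z = y" if "z \<in> {0<..<w - s}" "scaled_marginal a s z = 0" for z
    using scaled_marginal_decreasing[of a s z y] scaled_marginal_decreasing[of a s y z] assms y that
    by (cases z y rule: linorder_cases) auto
  moreover have "z powr a * F (z + s) \<le> y powr a * F (y + s)" if "z \<in> {0<..<w - s}" for z
    using payoff_maximal_at_root[of a s y z] assms y that by auto
  ultimately show ?thesis
    using y by blast
qed

end

lemma PiE_unique_root_maximizes_sum:
  fixes f :: "'i \<Rightarrow> 'a \<Rightarrow> 'b::ordered_comm_monoid_add"
  assumes "\<And>j. j \<in> A \<Longrightarrow> \<exists>y\<in>I j. P j y \<and> (\<forall>z\<in>I j. P j z \<longrightarrow> z = y)
                               \<and> (\<forall>z\<in>I j. f j z \<le> f j y)"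
  shows "\<exists>y\<in>Pi\<^sub>E A I. (\<forall>j\<in>A. P j (y j))
           \<and> (\<forall>z\<in>Pi\<^sub>E A I. (\<forall>j\<in>A. P j (z j)) \<longrightarrow> z = y)
           \<and> (\<forall>z\<in>Pi\<^sub>E A I. (\<Sum>j\<in>A. f j (z j)) \<le> (\<Sum>j\<in>A. f j (y j)))"
proof -
  obtain Y where Y: "\<And>j. j \<in> A \<Longrightarrow> Y j \<in> I j \<and> P j (Y j) \<and> (\<forall>z\<in>I j. P j z \<longrightarrow> z = Y j)
                                     \<and> (\<forall>z\<in>I j. f j z \<le> f j (Y j))"
    using assms by metis
  have "restrict Y A \<in> Pi\<^sub>E A I"
    using Y by auto
  moreover have "z = restrict Y A" if "z \<in> Pi\<^sub>E A I" "\<forall>j\<in>A. P j (z j)" for z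
    using Y that by (auto simp: PiE_iff extensional_def)
  moreover have "(\<Sum>j\<in>A. f j (z j)) \<le> (\<Sum>j\<in>A. f j (restrict Y A j))" if "z \<in> Pi\<^sub>E A I" for z
    using Y that by (intro sum_mono) auto
  ultimately show ?thesis
    using Y by (intro bexI[of _ "restrict Y A"]) auto
qed

theorem lemma2:
  fixes n m i :: nat
    and R p :: "nat \<Rightarrow> real \<Rightarrow> real"
    and a k :: "nat \<Rightarrow> real"
    and x :: "nat \<Rightarrow> nat \<Rightarrow> real"
  assumes "n \<ge> 1" and "m \<ge> 1"
    and R_gt: "\<And>j t. j \<in> {1..m} \<Longrightarrow> t \<ge> 0 \<Longrightarrow> R j t > 1"
    and p_range: "\<And>j t. j \<in> {1..m} \<Longrightarrow> t \<ge> 0 \<Longrightarrow> p j t \<in> {0..1}"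
    and p0: "\<And>j. j \<in> {1..m} \<Longrightarrow> p j 0 = 0"
    and p1: "\<And>j t. j \<in> {1..m} \<Longrightarrow> t \<ge> 1 \<Longrightarrow> p j t = 1"
    and a_range: "\<And>l. l \<in> {1..n} \<Longrightarrow> a l \<in> {0<..1}"
    and k_pos: "\<And>l. l \<in> {1..n} \<Longrightarrow> k l > 0"
    and F_cont: "\<And>l j. l \<in> {1..n} \<Longrightarrow> j \<in> {1..m} \<Longrightarrow>
                   continuous_on {0..1} (Feff R p a k l j)"
    and F_d1: "\<And>l j t. l \<in> {1..n} \<Longrightarrow> j \<in> {1..m} \<Longrightarrow> t \<in> {0<..<1} \<Longrightarrow>
                 (Feff R p a k l j has_real_derivative deriv (Feff R p a k l j) t) (at t)
                 \<and> deriv (Feff R p a k l j) t < 0"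
    and F_d2: "\<And>l j t. l \<in> {1..n} \<Longrightarrow> j \<in> {1..m} \<Longrightarrow> t \<in> {0<..<1} \<Longrightarrow>
                 (deriv (Feff R p a k l j) has_real_derivative
                    deriv (deriv (Feff R p a k l j)) t) (at t)
                 \<and> deriv (deriv (Feff R p a k l j)) t < 0"
    and i_in: "i \<in> {1..n}"
    and x_in: "\<And>l. l \<in> {1..n} - {i} \<Longrightarrow>
                 (\<forall>j\<in>{1..m}. x l j \<in> {0..1}) \<and> (\<Sum>j\<in>{1..m}. x l j) \<le> 1"
  shows "\<exists>y. y \<in> regionA R p a k n m i x
           \<and> (\<forall>j\<in>active R p a k n m i x. psi R p a k i j (y j) (xT n i x j) = 0)
           \<and> (\<forall>z\<in>regionA R p a k n m i x.
                (\<forall>j\<in>active R p a k n m i x. psi R p a k i j (z j) (xT n i x j) = 0) \<longrightarrow> z = y)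
           \<and> (\<forall>z\<in>regionA R p a k n m i x. Vfun R p a k n m i x z \<le> Vfun R p a k n m i x y)"
proof -
  have coordinatewise: "\<exists>y\<in>{0<..<omega R p a k i j - xT n i x j}. psi R p a k i j y (xT n i x j) = 0
      \<and> (\<forall>z\<in>{0<..<omega R p a k i j - xT n i x j}. psi R p a k i j z (xT n i x j) = 0 \<longrightarrow> z = y)
      \<and> (\<forall>z\<in>{0<..<omega R p a k i j - xT n i x j}.
           z powr a i * Feff R p a k i j (z + xT n i x j) \<le> y powr a i * Feff R p a k i j (y + xT n i x j))"
    if jA: "j \<in> active R p a k n m i x" for j
  proof -
    have j: "j \<in> {1..m}" and s_lt: "xT n i x j < omega R p a k i j"
      using jA by (auto simp: active_def)
    interpret Fj: decreasing_concave_on_unit "Feff R p a k i j" "deriv (Feff R p a k i j)"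
        "deriv (deriv (Feff R p a k i j))"
      using F_d1[OF i_in j] F_d2[OF i_in j] by unfold_locales auto
    have "\<exists>!w. w \<in> {0<..<1} \<and> Feff R p a k i j w = 0"
      using R_gt[OF j, of 0] p0[OF j] p1[OF j, of 1] k_pos[OF i_in]
      by (intro Fj.unique_zero F_cont[OF i_in j]) (auto simp: Feff_def)
    then have "omega R p a k i j \<in> {0<..<1}" "Feff R p a k i j (omega R p a k i j) = 0"
      unfolding omega_def by (metis (mono_tags, lifting) theI')+
    moreover have "0 \<le> xT n i x j"
      unfolding xT_def using x_in j by (intro sum_nonneg) auto
    ultimately show ?thesis
      using Fj.scaled_marginal_unique_root_maximizes_payoff[of "a i" "xT n i x j"] a_range[OF i_in] s_lt
      by (simp add: psi_def Fj.scaled_marginal_def)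
  qed
  from PiE_unique_root_maximizes_sum[OF coordinatewise] show ?thesis
    unfolding regionA_def Vfun_def Bex_def .
qed

end
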